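(* Let $(G,* )$ be a group and let $\mathcal{L}$ be a $T_0$-separating nest on $G$. If for every $g\in G$ and every $L\in\mathcal{L}$ we have $g*L\in\mathcal{L}$ and $L*g\in\mathcal{L}$, then $\triangleleft_{\mathcal{L}}$ is compatible with $*$.
   Context: A nest on $G$ is a family of subsets totally ordered by inclusion; it is $T_0$-separating if for all distinct $x,y$ some member contains exactly one of them. $x\triangleleft_{\mathcal{L}} y$ iff there exists $L\in\mathcal{L}$ with $x\in L$ and $y\notin L$. $g*L=\{g*l : l\in L\}$, $L*g=\{l*g : l\in L\}$. The order $\triangleleft_{\mathcal{L}}$ is compatible with $*$ if for all $a,b,g\in G$: $a\triangleleft_{\mathcal{L}} b$ if and only if ($a*g\triangleleft_{\mathcal{L}} b*g$ and $g*a\triangleleft_{\mathcal{L}} g*b$). *)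

theory Defs
  imports "HOL-Algebra.Coset"
begin

definition nest :: "'a set \<Rightarrow> 'a set set \<Rightarrow> bool" where
  "nest X \<L> \<longleftrightarrow> (\<forall>L\<in>\<L>. L \<subseteq> X) \<and> (\<forall>L\<in>\<L>. \<forall>M\<in>\<L>. L \<subseteq> M \<or> M \<subseteq> L)"

definition T0_separating :: "'a set \<Rightarrow> 'a set set \<Rightarrow> bool" where
  "T0_separating X \<L> \<longleftrightarrow>
     (\<forall>x\<in>X. \<forall>y\<in>X. x \<noteq> y \<longrightarrow> (\<exists>L\<in>\<L>. (x \<in> L \<and> y \<notin> L) \<or> (y \<in> L \<and> x \<notin> L)))"

definition nest_less :: "'a set set \<Rightarrow> 'a \<Rightarrow> 'a \<Rightarrow> bool" where
  "nest_less \<L> x y \<longleftrightarrow> (\<exists>L\<in>\<L>. x \<in> L \<and> y \<notin> L)"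

definition compatible :: "('a, 'b) monoid_scheme \<Rightarrow> ('a \<Rightarrow> 'a \<Rightarrow> bool) \<Rightarrow> bool" where
  "compatible G R \<longleftrightarrow>
     (\<forall>a\<in>carrier G. \<forall>b\<in>carrier G. \<forall>g\<in>carrier G.
        R a b \<longleftrightarrow> (R (a \<otimes>\<^bsub>G\<^esub> g) (b \<otimes>\<^bsub>G\<^esub> g) \<and> R (g \<otimes>\<^bsub>G\<^esub> a) (g \<otimes>\<^bsub>G\<^esub> b)))"

end

theory Submission
  imports Defs
begin

text \<open>Translating a set of the nest by g moves every separation of a and b to a separation of
  the translates, so the order is invariant; the converse direction is invariance under the
  inverse translation.\<close>

context group
begin

lemma r_coset_mult_mem_iff:
  assumes "L \<subseteq> carrier G" "x \<in> carrier G" "h \<in> carrier G"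
  shows "x \<otimes> h \<in> L #> h \<longleftrightarrow> x \<in> L"
proof
  assume "x \<otimes> h \<in> L #> h"
  then obtain l where "l \<in> L" "x \<otimes> h = l \<otimes> h"
    unfolding r_coset_def by blast
  with assms show "x \<in> L" by (metis right_cancel subsetD)
qed (auto simp: r_coset_def)

lemma l_coset_mult_mem_iff:
  assumes "L \<subseteq> carrier G" "x \<in> carrier G" "h \<in> carrier G"
  shows "h \<otimes> x \<in> h <# L \<longleftrightarrow> x \<in> L"
proof
  assume "h \<otimes> x \<in> h <# L"
  then obtain l where "l \<in> L" "h \<otimes> x = h \<otimes> l"
    unfolding l_coset_def by blast
  with assms show "x \<in> L" by (metis Units_eq Units_l_cancel subsetD)
qed (auto simp: l_coset_def)

lemma nest_less_mult_right:
  assumes subsets: "\<And>L. L \<in> \<L> \<Longrightarrow> L \<subseteq> carrier G"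
    and closed: "\<And>L. L \<in> \<L> \<Longrightarrow> L #> h \<in> \<L>"
    and "a \<in> carrier G" "b \<in> carrier G" "h \<in> carrier G"
    and "nest_less \<L> a b"
  shows "nest_less \<L> (a \<otimes> h) (b \<otimes> h)"
proof -
  obtain L where "L \<in> \<L>" "a \<in> L" "b \<notin> L"
    using \<open>nest_less \<L> a b\<close> unfolding nest_less_def by blast
  moreover have "a \<otimes> h \<in> L #> h \<longleftrightarrow> a \<in> L" "b \<otimes> h \<in> L #> h \<longleftrightarrow> b \<in> L"
    using r_coset_mult_mem_iff subsets \<open>L \<in> \<L>\<close> assms(3-5) by blast+
  ultimately have "L #> h \<in> \<L>" "a \<otimes> h \<in> L #> h" "b \<otimes> h \<notin> L #> h"
    using closed by blast+
  then show ?thesis unfolding nest_less_def by blast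
qed

lemma nest_less_mult_left:
  assumes subsets: "\<And>L. L \<in> \<L> \<Longrightarrow> L \<subseteq> carrier G"
    and closed: "\<And>L. L \<in> \<L> \<Longrightarrow> h <# L \<in> \<L>"
    and "a \<in> carrier G" "b \<in> carrier G" "h \<in> carrier G"
    and "nest_less \<L> a b"
  shows "nest_less \<L> (h \<otimes> a) (h \<otimes> b)"
proof -
  obtain L where "L \<in> \<L>" "a \<in> L" "b \<notin> L"
    using \<open>nest_less \<L> a b\<close> unfolding nest_less_def by blast
  moreover have "h \<otimes> a \<in> h <# L \<longleftrightarrow> a \<in> L" "h \<otimes> b \<in> h <# L \<longleftrightarrow> b \<in> L"
    using l_coset_mult_mem_iff subsets \<open>L \<in> \<L>\<close> assms(3-5) by blast+
  ultimately have "h <# L \<in> \<L>" "h \<otimes> a \<in> h <# L" "h \<otimes> b \<notin> h <# L"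
    using closed by blast+
  then show ?thesis unfolding nest_less_def by blast
qed

end

theorem proposition5p1:
  fixes G (structure) and \<L> :: "'a set set"
  assumes "group G"
    and "nest (carrier G) \<L>"
    and "T0_separating (carrier G) \<L>"
    and "\<And>g L. g \<in> carrier G \<Longrightarrow> L \<in> \<L> \<Longrightarrow> g <# L \<in> \<L>"
    and "\<And>g L. g \<in> carrier G \<Longrightarrow> L \<in> \<L> \<Longrightarrow> L #> g \<in> \<L>"
  shows "compatible G (nest_less \<L>)"
  unfolding compatible_def
proof (intro ballI iffI conjI)
  interpret group G by fact
  have subsets: "\<And>L. L \<in> \<L> \<Longrightarrow> L \<subseteq> carrier G"
    using assms(2) unfolding nest_def by blast
  fix a b g assume carr: "a \<in> carrier G" "b \<in> carrier G" "g \<in> carrier G"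
  {
    assume "nest_less \<L> a b"
    then show "nest_less \<L> (a \<otimes> g) (b \<otimes> g)" "nest_less \<L> (g \<otimes> a) (g \<otimes> b)"
      using nest_less_mult_right[OF subsets assms(5)] nest_less_mult_left[OF subsets assms(4)] carr
      by blast+
  }
  assume "nest_less \<L> (a \<otimes> g) (b \<otimes> g) \<and> nest_less \<L> (g \<otimes> a) (g \<otimes> b)"
  then have "nest_less \<L> (a \<otimes> g \<otimes> inv g) (b \<otimes> g \<otimes> inv g)"
    using nest_less_mult_right[OF subsets assms(5)] carr by (meson inv_closed m_closed)
  then show "nest_less \<L> a b"
    using carr by (simp add: m_assoc)
qed

end
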